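(* Let $\mathcal N$ be a one-layer ReLU CNN with input dimension $n_0^{(1)}\times n_0^{(2)}\times d_0$, $d_1$ filters of dimension $f_1^{(1)}\times f_1^{(2)}\times d_0$ and stride $s_1$, where $n_0^{(1)},n_0^{(2)},d_0,f_1^{(1)},f_1^{(2)},s_1$ are fixed. Then as $d_1\to\infty$, the maximal number of linear regions satisfies $R_{\mathcal N}=\Theta\big(d_1^{\#\bigcup_{(i,j)\in I_{\mathcal N}}S_{i,j}}\big)$. In particular, if $\bigcup_{(i,j)\in I_{\mathcal N}}S_{i,j}=\{(a,b,c):1\le a\le n_0^{(1)},1\le b\le n_0^{(2)},1\le c\le d_0\}$, then $R_{\mathcal N}=\Theta\big(d_1^{\,n_0^{(1)}n_0^{(2)}d_0}\big)$.
   Context: One-layer ReLU CNN: input $X^0\in\mathbb R^{n_0^{(1)}\times n_0^{(2)}\times d_0}$; filters $W^{1,k}\in\mathbb R^{f_1^{(1)}\times f_1^{(2)}\times d_0}$, biases $B^{1,k}$, $1\le k\le d_1$, stride $s_1$; $n_1^{(r)}=\lfloor (n_0^{(r)}-f_1^{(r)})/s_1\rfloor+1$; pre-activations $Z^1_{i,j,k}=\sum_{a,b,c}W^{1,k}_{a,b,c}X^0_{a+(i-1)s_1,b+(j-1)s_1,c}+B^{1,k}$. An activation pattern assigns $\pm1$ to each neuron $(i,j,k)$; its region is the set of inputs where each pre-activation times its sign is positive. $R_{\mathcal N}$ is the maximum over all parameter values of the number of activation patterns with nonempty region. $I_{\mathcal N}=\{(i,j):1\le i\le n_1^{(1)},1\le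 j\le n_1^{(2)}\}$ and $S_{i,j}=\{(a+(i-1)s_1,b+(j-1)s_1,c):1\le a\le f_1^{(1)},1\le b\le f_1^{(2)},1\le c\le d_0\}$. $f=\Theta(g)$ means $c_1g\le f\le c_2 g$ for some constants $c_1,c_2>0$ and all sufficiently large arguments. *)

theory Defs
  imports Complex_Main "HOL-Library.Landau_Symbols"
begin

text \<open>Indices are 1-based as in the paper.
  Input: X :: nat \<Rightarrow> nat \<Rightarrow> nat \<Rightarrow> real (only entries with
  1 \<le> a \<le> n01, 1 \<le> b \<le> n02, 1 \<le> c \<le> d0 matter).
  Filters: W k a b c = W^{1,k}_{a,b,c}; biases B k = B^{1,k}.\<close>

definition outdim :: "nat \<Rightarrow> nat \<Rightarrow> nat \<Rightarrow> nat" where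
  "outdim n f s = (n - f) div s + 1"

definition preact ::
  "nat \<Rightarrow> nat \<Rightarrow> nat \<Rightarrow> nat \<Rightarrow> (nat \<Rightarrow> nat \<Rightarrow> nat \<Rightarrow> nat \<Rightarrow> real) \<Rightarrow> (nat \<Rightarrow> real)
   \<Rightarrow> (nat \<Rightarrow> nat \<Rightarrow> nat \<Rightarrow> real) \<Rightarrow> nat \<Rightarrow> nat \<Rightarrow> nat \<Rightarrow> real" where
  "preact d0 f1 f2 s W B X i j k =
     (\<Sum>a\<in>{1..f1}. \<Sum>b\<in>{1..f2}. \<Sum>c\<in>{1..d0}.
        W k a b c * X (a + (i - 1) * s) (b + (j - 1) * s) c) + B k"

definition neurons :: "nat \<Rightarrow> nat \<Rightarrow> nat \<Rightarrow> nat \<Rightarrow> nat \<Rightarrow> nat \<Rightarrow> (nat \<times> nat \<times> nat) set" where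
  "neurons n01 n02 f1 f2 s d1 =
     {1..outdim n01 f1 s} \<times> {1..outdim n02 f2 s} \<times> {1..d1}"

text \<open>Activation patterns: sign \<plusminus>1 on each neuron, 0 elsewhere (for extensionality).\<close>
definition patterns :: "(nat \<times> nat \<times> nat) set \<Rightarrow> (nat \<times> nat \<times> nat \<Rightarrow> int) set" where
  "patterns N = {p. (\<forall>x\<in>N. p x \<in> {-1, 1}) \<and> (\<forall>x. x \<notin> N \<longrightarrow> p x = 0)}"

definition region ::
  "nat \<Rightarrow> nat \<Rightarrow> nat \<Rightarrow> nat \<Rightarrow> nat \<Rightarrow> nat \<Rightarrow> nat
   \<Rightarrow> (nat \<Rightarrow> nat \<Rightarrow> nat \<Rightarrow> nat \<Rightarrow> real) \<Rightarrow> (nat \<Rightarrow> real)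
   \<Rightarrow> (nat \<times> nat \<times> nat \<Rightarrow> int) \<Rightarrow> (nat \<Rightarrow> nat \<Rightarrow> nat \<Rightarrow> real) set" where
  "region n01 n02 d0 f1 f2 s d1 W B (p :: nat \<times> nat \<times> nat \<Rightarrow> int) =
     {X. \<forall>(i, j, k)\<in>neurons n01 n02 f1 f2 s d1.
          real_of_int (p (i, j, k)) * preact d0 f1 f2 s W B X i j k > 0}"

definition num_regions ::
  "nat \<Rightarrow> nat \<Rightarrow> nat \<Rightarrow> nat \<Rightarrow> nat \<Rightarrow> nat \<Rightarrow> nat
   \<Rightarrow> (nat \<Rightarrow> nat \<Rightarrow> nat \<Rightarrow> nat \<Rightarrow> real) \<Rightarrow> (nat \<Rightarrow> real) \<Rightarrow> nat" where
  "num_regions n01 n02 d0 f1 f2 s d1 W B =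
     card {p \<in> patterns (neurons n01 n02 f1 f2 s d1).
             region n01 n02 d0 f1 f2 s d1 W B p \<noteq> {}}"

text \<open>R_N: maximum over all parameter values (the set of values is finite, bounded by 2^#neurons).\<close>
definition max_regions :: "nat \<Rightarrow> nat \<Rightarrow> nat \<Rightarrow> nat \<Rightarrow> nat \<Rightarrow> nat \<Rightarrow> nat \<Rightarrow> nat" where
  "max_regions n01 n02 d0 f1 f2 s d1 =
     Max {num_regions n01 n02 d0 f1 f2 s d1 W B | W B. True}"

definition patch :: "nat \<Rightarrow> nat \<Rightarrow> nat \<Rightarrow> nat \<Rightarrow> nat \<Rightarrow> nat \<Rightarrow> (nat \<times> nat \<times> nat) set" where
  "patch d0 f1 f2 s i j =
     {(a + (i - 1) * s, b + (j - 1) * s, c) | a b c.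
        1 \<le> a \<and> a \<le> f1 \<and> 1 \<le> b \<and> b \<le> f2 \<and> 1 \<le> c \<and> c \<le> d0}"

definition covered :: "nat \<Rightarrow> nat \<Rightarrow> nat \<Rightarrow> nat \<Rightarrow> nat \<Rightarrow> nat \<Rightarrow> (nat \<times> nat \<times> nat) set" where
  "covered n01 n02 d0 f1 f2 s =
     (\<Union>(i, j)\<in>{1..outdim n01 f1 s} \<times> {1..outdim n02 f2 s}. patch d0 f1 f2 s i j)"

end

theory Submission
  imports Defs "HOL-Library.FuncSet"
begin

text \<open>Only the input entries in the covered set \<open>U\<close> enter any pre-activation, so every
  neuron is an affine function on \<open>\<real>\<^sup>U\<close> and the regions are cells of an arrangement of
  \<open>c \<cdot> d1\<close> hyperplanes in \<open>\<real>\<^sup>U\<close>, where \<open>c\<close> is the number of patch positions. By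
  deletion--restriction, \<open>N\<close> hyperplanes in \<open>\<real>\<^sup>n\<close> have at most \<open>(N + 1)\<^sup>n\<close> cells, giving
  \<open>R \<le> (c \<cdot> d1 + 1)\<^bsup>|U|\<^esup>\<close>. Conversely, spending \<open>d1 div |U|\<close> filters on each covered entry,
  each a unit weight on that entry with thresholds at successive half-integers, cuts \<open>\<real>\<^sup>U\<close> into
  a grid of \<open>(d1 div |U| + 1)\<^bsup>|U|\<^esup>\<close> cells. Both bounds are \<open>\<Theta>(d1\<^bsup>|U|\<^esup>)\<close>.\<close>

section \<open>Cells of hyperplane arrangements\<close>

definition affine_form :: "'a set \<Rightarrow> ('a \<Rightarrow> real) \<Rightarrow> real \<Rightarrow> ('a \<Rightarrow> real) \<Rightarrow> real" where
  "affine_form V a b x = (\<Sum>i\<in>V. a i * x i) + b"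

definition sign_patterns :: "'n set \<Rightarrow> ('n \<Rightarrow> int) set" where
  "sign_patterns N = {p. (\<forall>h\<in>N. p h \<in> {-1, 1}) \<and> (\<forall>h. h \<notin> N \<longrightarrow> p h = 0)}"

definition realized_patterns ::
  "'a set \<Rightarrow> 'n set \<Rightarrow> ('n \<Rightarrow> 'a \<Rightarrow> real) \<Rightarrow> ('n \<Rightarrow> real) \<Rightarrow> ('n \<Rightarrow> int) set" where
  "realized_patterns V N A B =
     {p \<in> sign_patterns N. \<exists>x. \<forall>h\<in>N. real_of_int (p h) * affine_form V (A h) (B h) x > 0}"

lemma finite_sign_patterns: "finite N \<Longrightarrow> finite (sign_patterns N)"
  using finite_set_of_finite_funs[of N "{-1::int, 1}" 0]
  unfolding sign_patterns_def by (simp add: all_conj_distrib Ball_def imp_conjL conj_commute)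

lemma finite_realized_patterns: "finite N \<Longrightarrow> finite (realized_patterns V N A B)"
  unfolding realized_patterns_def by (auto intro: finite_subset[OF _ finite_sign_patterns])

lemma affine_form_convex_comb:
  "affine_form V a b (\<lambda>i. (1 - t) * x i + t * y i) = (1 - t) * affine_form V a b x + t * affine_form V a b y"
proof -
  have "(\<Sum>i\<in>V. a i * ((1 - t) * x i + t * y i))
      = (\<Sum>i\<in>V. (1 - t) * (a i * x i) + t * (a i * y i))"
    by (simp add: algebra_simps)
  also have "\<dots> = (1 - t) * (\<Sum>i\<in>V. a i * x i) + t * (\<Sum>i\<in>V. a i * y i)"
    by (simp only: sum.distrib flip: sum_distrib_left)
  finally show ?thesis
    unfolding affine_form_def by (simp add: algebra_simps)
qed

lemma segment_crosses_hyperplane: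
  assumes "affine_form V a b x > 0" "affine_form V a b y < 0"
    and "\<forall>h\<in>N. real_of_int (q h) * affine_form V (A h) (B h) x > 0"
    and "\<forall>h\<in>N. real_of_int (q h) * affine_form V (A h) (B h) y > 0"
  obtains z where "affine_form V a b z = 0"
    and "\<forall>h\<in>N. real_of_int (q h) * affine_form V (A h) (B h) z > 0"
proof
  define t where "t = affine_form V a b x / (affine_form V a b x - affine_form V a b y)"
  have t: "0 < t" "t < 1"
    using assms(1,2) by (auto simp: t_def field_simps)
  define z where "z = (\<lambda>i. (1 - t) * x i + t * y i)"
  have "affine_form V a b z = (1 - t) * affine_form V a b x + t * affine_form V a b y"
    unfolding z_def by (rule affine_form_convex_comb)
  also have "\<dots> = 0"
    using assms(1,2) unfolding t_def by (simp add: field_simps)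
  finally show "affine_form V a b z = 0" .
  show "\<forall>h\<in>N. real_of_int (q h) * affine_form V (A h) (B h) z > 0"
  proof
    fix h assume "h \<in> N"
    then have "(1 - t) * (real_of_int (q h) * affine_form V (A h) (B h) x)
             + t * (real_of_int (q h) * affine_form V (A h) (B h) y) > 0"
      using assms(3,4) t by (simp add: add_pos_pos)
    then show "real_of_int (q h) * affine_form V (A h) (B h) z > 0"
      unfolding z_def affine_form_convex_comb by (simp add: algebra_simps)
  qed
qed

text \<open>Substituting the equation of the hyperplane \<open>a\<close> for the coordinate \<open>j\<close> identifies
  the hyperplane with a space of one dimension less.\<close>
lemma affine_form_eliminate_coordinate:
  assumes "finite V" "j \<in> V" "a j \<noteq> 0" "affine_form V a b y = 0"
  shows "affine_form (V - {j}) (\<lambda>i. c i - c j * a i / a j) (d - c j * b / a j) y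
         = affine_form V c d y"
proof -
  have split: "(\<Sum>i\<in>V. f i * y i) = f j * y j + (\<Sum>i\<in>V - {j}. f i * y i)" for f
    using sum.remove[OF assms(1,2)] .
  have rest: "(\<Sum>i\<in>V - {j}. a i * y i) = - b - a j * y j"
    using assms(4) split[of a] unfolding affine_form_def by simp
  have "(\<Sum>i\<in>V - {j}. (c i - c j * a i / a j) * y i)
      = (\<Sum>i\<in>V - {j}. c i * y i) - c j / a j * (\<Sum>i\<in>V - {j}. a i * y i)"
    by (simp add: algebra_simps sum_subtractf sum_distrib_left)
  then show ?thesis
    using assms(3) split[of c] unfolding affine_form_def rest by (simp add: field_simps)
qed

lemma power_plus_power_pred_le: "1 \<le> m \<Longrightarrow> (n + 1) ^ m + (n + 1) ^ (m - 1) \<le> (n + 2 :: nat) ^ m"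
proof (cases m)
  case (Suc k)
  have "(n + 1) ^ k \<le> (n + 2) ^ k" by (intro power_mono) auto
  then have "(n + 2) * (n + 1) ^ k \<le> (n + 2) * (n + 2) ^ k" by (rule mult_le_mono2)
  then show ?thesis using Suc by simp
qed simp

lemma realized_patterns_delete:
  assumes "p \<in> realized_patterns V (insert g N) A B" "g \<notin> N"
  shows "p(g := 0) \<in> realized_patterns V N A B"
  using assms unfolding realized_patterns_def sign_patterns_def by auto

lemma realized_patterns_both_signs:
  assumes "q(g := 1) \<in> realized_patterns V (insert g N) A B"
    and "q(g := -1) \<in> realized_patterns V (insert g N) A B" and "g \<notin> N"
  obtains x y where "affine_form V (A g) (B g) x > 0" "affine_form V (A g) (B g) y < 0"
    and "\<forall>h\<in>N. real_of_int (q h) * affine_form V (A h) (B h) x > 0"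
    and "\<forall>h\<in>N. real_of_int (q h) * affine_form V (A h) (B h) y > 0"
proof -
  obtain x y where
    x: "\<forall>h\<in>insert g N. real_of_int ((q(g := 1)) h) * affine_form V (A h) (B h) x > 0" and
    y: "\<forall>h\<in>insert g N. real_of_int ((q(g := -1)) h) * affine_form V (A h) (B h) y > 0"
    using assms(1,2) unfolding realized_patterns_def by blast
  have "h \<in> N \<Longrightarrow> h \<noteq> g" for h using assms(3) by blast
  with x y show thesis by (intro that) auto
qed

lemma realized_patterns_restrict:
  assumes "q(g := 1) \<in> realized_patterns V (insert g N) A B"
    and "q(g := -1) \<in> realized_patterns V (insert g N) A B"
    and "g \<notin> N" "q \<in> sign_patterns N" "finite V" "j \<in> V" "A g j \<noteq> 0"
  shows "q \<in> realized_patterns (V - {j}) N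
           (\<lambda>h i. A h i - A h j * A g i / A g j) (\<lambda>h. B h - A h j * B g / A g j)"
proof -
  obtain x y where "affine_form V (A g) (B g) x > 0" "affine_form V (A g) (B g) y < 0"
    and "\<forall>h\<in>N. real_of_int (q h) * affine_form V (A h) (B h) x > 0"
    and "\<forall>h\<in>N. real_of_int (q h) * affine_form V (A h) (B h) y > 0"
    using realized_patterns_both_signs[OF assms(1-3)] .
  then obtain z where "affine_form V (A g) (B g) z = 0"
    and "\<forall>h\<in>N. real_of_int (q h) * affine_form V (A h) (B h) z > 0"
    by (rule segment_crosses_hyperplane)
  with assms(4-7) show ?thesis
    unfolding realized_patterns_def
    by (intro CollectI conjI exI[of _ z]) (simp_all add: affine_form_eliminate_coordinate)
qed

lemma card_realized_patterns_insert_le: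
  fixes V :: "'a set" and N :: "'n set" and A B g
  defines "R' \<equiv> realized_patterns V (insert g N) A B"
  assumes "finite N" "g \<notin> N"
  shows "card R' \<le> card (realized_patterns V N A B)
                    + card {q \<in> realized_patterns V N A B. q(g := 1) \<in> R' \<and> q(g := -1) \<in> R'}"
    (is "_ \<le> card ?R + card ?T")
proof -
  define lift where "lift q = (if q(g := 1) \<in> R' then q(g := 1) else q(g := -1))" for q :: "_ \<Rightarrow> int"
  have "R' \<subseteq> lift ` ?R \<union> (\<lambda>q. q(g := -1)) ` ?T"
  proof
    fix p assume p: "p \<in> R'"
    have q: "p(g := 0) \<in> ?R"
      using p assms(3) unfolding R'_def by (rule realized_patterns_delete)
    have "p g = 1 \<or> p g = -1"
      using p unfolding R'_def realized_patterns_def sign_patterns_def by auto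
    then show "p \<in> lift ` ?R \<union> (\<lambda>q. q(g := -1)) ` ?T"
    proof
      assume "p g = 1"
      then have "(p(g := 0))(g := 1) = p" by auto
      with p have "lift (p(g := 0)) = p" unfolding lift_def by simp
      then show ?thesis
        using q by (intro UnI1 image_eqI[where x = "p(g := 0)"]) simp_all
    next
      assume "p g = -1"
      then have p_eq: "(p(g := 0))(g := -1) = p" by auto
      show ?thesis
      proof (cases "(p(g := 0))(g := 1) \<in> R'")
        case True
        with p p_eq q have "p(g := 0) \<in> ?T" by simp
        then show ?thesis
          using p_eq by (intro UnI2 image_eqI[where x = "p(g := 0)"]) simp_all
      next
        case False
        with p_eq have "lift (p(g := 0)) = p" unfolding lift_def by simp
        then show ?thesis
          using q by (intro UnI1 image_eqI[where x = "p(g := 0)"]) simp_all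
      qed
    qed
  qed
  moreover have fin: "finite ?R" "finite ?T"
    using finite_realized_patterns[OF assms(2), of V A B] by simp_all
  ultimately have "card R' \<le> card (lift ` ?R \<union> (\<lambda>q. q(g := -1)) ` ?T)"
    by (intro card_mono) simp_all
  also have "\<dots> \<le> card (lift ` ?R) + card ((\<lambda>q. q(g := -1)) ` ?T)"
    by (rule card_Un_le)
  also have "\<dots> \<le> card ?R + card ?T"
    by (intro add_mono card_image_le fin)
  finally show ?thesis .
qed

lemma cut_patterns_realized_on_hyperplane:
  fixes V :: "'a set" and N :: "'n set" and A B g
  defines "R' \<equiv> realized_patterns V (insert g N) A B"
  assumes "finite V" "g \<notin> N" "q(g := 1) \<in> R'" "q(g := -1) \<in> R'"
  obtains j where "j \<in> V"
    and "{p \<in> realized_patterns V N A B. p(g := 1) \<in> R' \<and> p(g := -1) \<in> R'}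
         \<subseteq> realized_patterns (V - {j}) N
              (\<lambda>h i. A h i - A h j * A g i / A g j) (\<lambda>h. B h - A h j * B g / A g j)"
proof -
  obtain x y where "affine_form V (A g) (B g) x > 0" "affine_form V (A g) (B g) y < 0"
    using realized_patterns_both_signs assms(3-5) unfolding R'_def by metis
  have "\<exists>j\<in>V. A g j \<noteq> 0"
  proof (rule ccontr)
    assume "\<not> (\<exists>j\<in>V. A g j \<noteq> 0)"
    then have "affine_form V (A g) (B g) z = B g" for z
      unfolding affine_form_def by simp
    with \<open>affine_form V (A g) (B g) x > 0\<close> \<open>affine_form V (A g) (B g) y < 0\<close> show False
      by simp
  qed
  then obtain j where j: "j \<in> V" "A g j \<noteq> 0" by blast
  show thesis
  proof (rule that[OF j(1)], rule subsetI)
    fix p assume p: "p \<in> {p \<in> realized_patterns V N A B. p(g := 1) \<in> R' \<and> p(g := -1) \<in> R'}"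
    then have "p \<in> sign_patterns N"
      by (simp add: realized_patterns_def)
    with p show "p \<in> realized_patterns (V - {j}) N
        (\<lambda>h i. A h i - A h j * A g i / A g j) (\<lambda>h. B h - A h j * B g / A g j)"
      using realized_patterns_restrict[of p g V N A B j] assms(2,3) j unfolding R'_def by simp
  qed
qed

text \<open>Deletion--restriction: the cells of an arrangement are those of the arrangement without
  \<open>g\<close>, plus one for every cell that \<open>g\<close> cuts in two; the latter are cells of the arrangement
  induced on the hyperplane \<open>g\<close>.\<close>
lemma card_realized_patterns_le:
  assumes "finite N" "finite V"
  shows "card (realized_patterns V N A B) \<le> (card N + 1) ^ card V"
  using assms
proof (induction N arbitrary: V A B rule: finite_induct)
  case empty
  have "realized_patterns V {} A B \<subseteq> {\<lambda>_. 0}"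
    unfolding realized_patterns_def sign_patterns_def by auto
  then have "realized_patterns V {} A B = {} \<or> realized_patterns V {} A B = {\<lambda>_. 0}"
    by (rule subset_singletonD)
  then show ?case by auto
next
  case (insert g N)
  let ?R' = "realized_patterns V (insert g N) A B"
  let ?T = "{q \<in> realized_patterns V N A B. q(g := 1) \<in> ?R' \<and> q(g := -1) \<in> ?R'}"
  have R': "card ?R' \<le> (card N + 1) ^ card V + card ?T"
    using card_realized_patterns_insert_le[OF insert(1,2), of V A B]
      insert.IH[OF insert.prems, of A B] by linarith
  show ?case
  proof (cases "?T = {}")
    case True
    have "(card N + 1) ^ card V \<le> (card (insert g N) + 1) ^ card V"
      using insert(1) by (simp add: power_mono card_insert_le)
    then show ?thesis using R' True by simp
  next
    case False
    then obtain q where "q \<in> ?T" by blast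
    then obtain j where j: "j \<in> V" and cut: "?T \<subseteq> realized_patterns (V - {j}) N
        (\<lambda>h i. A h i - A h j * A g i / A g j) (\<lambda>h. B h - A h j * B g / A g j)"
      using cut_patterns_realized_on_hyperplane[OF insert.prems insert(2)] by blast
    have "card ?T \<le> card (realized_patterns (V - {j}) N
        (\<lambda>h i. A h i - A h j * A g i / A g j) (\<lambda>h. B h - A h j * B g / A g j))"
      using cut by (intro card_mono finite_realized_patterns insert(1))
    also have "\<dots> \<le> (card N + 1) ^ (card V - 1)"
      using insert.IH[of "V - {j}"] insert.prems j by simp
    finally have "card ?R' \<le> (card N + 1) ^ card V + (card N + 1) ^ (card V - 1)"
      using R' by linarith
    also have "\<dots> \<le> (card (insert g N) + 1) ^ card V"
    proof -
      have "1 \<le> card V"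
        using j(1) insert.prems by (auto simp: Suc_le_eq card_gt_0_iff)
      then show ?thesis
        using power_plus_power_pred_le[of "card V" "card N"] insert(1,2) by simp
    qed
    finally show ?thesis .
  qed
qed

section \<open>Region counts of the convolutional layer\<close>

lemma patch_eq_image: "patch d0 f1 f2 s i j =
   (\<lambda>(a, b, c). (a + (i - 1) * s, b + (j - 1) * s, c)) ` ({1..f1} \<times> {1..f2} \<times> {1..d0})"
  unfolding patch_def by (auto simp: image_iff)

lemma finite_covered: "finite (covered n01 n02 d0 f1 f2 s)"
  unfolding covered_def patch_eq_image by (intro finite_UN_I) auto

definition patch_offset :: "nat \<Rightarrow> nat \<Rightarrow> nat \<Rightarrow> nat \<times> nat \<times> nat \<Rightarrow> nat \<times> nat \<times> nat" where
  "patch_offset s i j = (\<lambda>(a, b, c). (a - (i - 1) * s, b - (j - 1) * s, c))"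

lemma patch_offset_mem:
  assumes "u \<in> patch d0 f1 f2 s i j"
  obtains a b c where "patch_offset s i j u = (a, b, c)" "(a, b, c) \<in> {1..f1} \<times> {1..f2} \<times> {1..d0}"
    and "u = (a + (i - 1) * s, b + (j - 1) * s, c)"
  using assms unfolding patch_def patch_offset_def by auto

lemma preact_eq_sum_box: "preact d0 f1 f2 s W B X i j k =
  (\<Sum>(a, b, c)\<in>{1..f1} \<times> {1..f2} \<times> {1..d0}. W k a b c * X (a + (i - 1) * s) (b + (j - 1) * s) c) + B k"
  unfolding preact_def by (simp add: sum.cartesian_product)

definition neuron_coeffs ::
  "nat \<Rightarrow> nat \<Rightarrow> nat \<Rightarrow> nat \<Rightarrow> (nat \<Rightarrow> nat \<Rightarrow> nat \<Rightarrow> nat \<Rightarrow> real)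
   \<Rightarrow> nat \<times> nat \<times> nat \<Rightarrow> nat \<times> nat \<times> nat \<Rightarrow> real" where
  "neuron_coeffs d0 f1 f2 s W = (\<lambda>(i, j, k) v.
     if v \<in> patch d0 f1 f2 s i j then case_prod (case_prod \<circ> W k) (patch_offset s i j v) else 0)"

definition flat_input :: "(nat \<Rightarrow> nat \<Rightarrow> nat \<Rightarrow> real) \<Rightarrow> nat \<times> nat \<times> nat \<Rightarrow> real" where
  "flat_input X = (\<lambda>(a, b, c). X a b c)"

lemma preact_eq_affine_form:
  assumes "i \<in> {1..outdim n01 f1 s}" "j \<in> {1..outdim n02 f2 s}"
  shows "preact d0 f1 f2 s W B X i j k =
     affine_form (covered n01 n02 d0 f1 f2 s) (neuron_coeffs d0 f1 f2 s W (i, j, k)) (B k) (flat_input X)"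
proof -
  define shift where "shift = (\<lambda>(a, b, c). (a + (i - 1) * s, b + (j - 1) * s, c::nat))"
  define box where "box = {1..f1} \<times> {1..f2} \<times> {1..d0}"
  let ?w = "neuron_coeffs d0 f1 f2 s W (i, j, k)"
  have patch: "patch d0 f1 f2 s i j = shift ` box"
    unfolding shift_def box_def by (rule patch_eq_image)
  have "patch d0 f1 f2 s i j \<subseteq> covered n01 n02 d0 f1 f2 s"
    unfolding covered_def using assms by blast
  then have "(\<Sum>v\<in>covered n01 n02 d0 f1 f2 s. ?w v * flat_input X v)
      = (\<Sum>v\<in>patch d0 f1 f2 s i j. ?w v * flat_input X v)"
    by (intro sum.mono_neutral_right finite_covered) (auto simp: neuron_coeffs_def)
  also have "\<dots> = (\<Sum>v\<in>box. ?w (shift v) * flat_input X (shift v))"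
    unfolding patch by (rule sum.reindex_cong[where l = shift]) (auto simp: inj_on_def shift_def)
  also have "\<dots> = (\<Sum>(a, b, c)\<in>box. W k a b c * X (a + (i - 1) * s) (b + (j - 1) * s) c)"
  proof (rule sum.cong)
    fix v assume "v \<in> box"
    then have "shift v \<in> patch d0 f1 f2 s i j" unfolding patch by blast
    then show "?w (shift v) * flat_input X (shift v) =
        (case v of (a, b, c) \<Rightarrow> W k a b c * X (a + (i - 1) * s) (b + (j - 1) * s) c)"
      unfolding neuron_coeffs_def flat_input_def shift_def patch_offset_def by (cases v) auto
  qed simp
  finally show ?thesis
    unfolding affine_form_def preact_eq_sum_box box_def by simp
qed

lemma patterns_eq_sign_patterns: "patterns N = sign_patterns N"
  unfolding patterns_def sign_patterns_def by simp

lemma finite_neurons: "finite (neurons n01 n02 f1 f2 s d1)"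
  unfolding neurons_def by auto

lemma card_neurons: "card (neurons n01 n02 f1 f2 s d1) = outdim n01 f1 s * outdim n02 f2 s * d1"
  unfolding neurons_def by (simp add: card_cartesian_product)

lemma num_regions_le:
  "num_regions n01 n02 d0 f1 f2 s d1 W B \<le>
     (outdim n01 f1 s * outdim n02 f2 s * d1 + 1) ^ card (covered n01 n02 d0 f1 f2 s)"
proof -
  let ?N = "neurons n01 n02 f1 f2 s d1" and ?U = "covered n01 n02 d0 f1 f2 s"
  let ?A = "neuron_coeffs d0 f1 f2 s W" and ?B = "\<lambda>(_, _, k). B k"
  have "{p \<in> patterns ?N. region n01 n02 d0 f1 f2 s d1 W B p \<noteq> {}} \<subseteq> realized_patterns ?U ?N ?A ?B"
  proof
    fix p assume "p \<in> {p \<in> patterns ?N. region n01 n02 d0 f1 f2 s d1 W B p \<noteq> {}}"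
    then obtain X where p: "p \<in> patterns ?N" and X: "X \<in> region n01 n02 d0 f1 f2 s d1 W B p"
      by blast
    have "\<forall>h\<in>?N. real_of_int (p h) * affine_form ?U (?A h) (?B h) (flat_input X) > 0"
    proof
      fix h assume h: "h \<in> ?N"
      then obtain i j k where "h = (i, j, k)" "i \<in> {1..outdim n01 f1 s}" "j \<in> {1..outdim n02 f2 s}"
        unfolding neurons_def by auto
      then show "real_of_int (p h) * affine_form ?U (?A h) (?B h) (flat_input X) > 0"
        using X h unfolding region_def by (auto simp: preact_eq_affine_form)
    qed
    with p show "p \<in> realized_patterns ?U ?N ?A ?B"
      unfolding realized_patterns_def patterns_eq_sign_patterns by blast
  qed
  then have "num_regions n01 n02 d0 f1 f2 s d1 W B \<le> card (realized_patterns ?U ?N ?A ?B)"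
    unfolding num_regions_def by (intro card_mono finite_realized_patterns finite_neurons)
  also have "\<dots> \<le> (card ?N + 1) ^ card ?U"
    by (intro card_realized_patterns_le finite_neurons finite_covered)
  finally show ?thesis
    unfolding card_neurons .
qed

lemma finite_num_regions_values: "finite {num_regions n01 n02 d0 f1 f2 s d1 W B | W B. True}"
proof (rule finite_subset)
  show "{num_regions n01 n02 d0 f1 f2 s d1 W B | W B. True}
        \<subseteq> {..(outdim n01 f1 s * outdim n02 f2 s * d1 + 1) ^ card (covered n01 n02 d0 f1 f2 s)}"
    using num_regions_le by auto
qed simp

lemma num_regions_le_max_regions:
  "num_regions n01 n02 d0 f1 f2 s d1 W B \<le> max_regions n01 n02 d0 f1 f2 s d1"
  unfolding max_regions_def by (rule Max_ge[OF finite_num_regions_values]) blast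

lemma max_regions_le:
  "max_regions n01 n02 d0 f1 f2 s d1 \<le>
     (outdim n01 f1 s * outdim n02 f2 s * d1 + 1) ^ card (covered n01 n02 d0 f1 f2 s)"
  unfolding max_regions_def using num_regions_le
  by (subst Max_le_iff[OF finite_num_regions_values]) auto

definition activation_pattern ::
  "nat \<Rightarrow> nat \<Rightarrow> nat \<Rightarrow> nat \<Rightarrow> nat \<Rightarrow> nat \<Rightarrow> nat
   \<Rightarrow> (nat \<Rightarrow> nat \<Rightarrow> nat \<Rightarrow> nat \<Rightarrow> real) \<Rightarrow> (nat \<Rightarrow> real)
   \<Rightarrow> (nat \<Rightarrow> nat \<Rightarrow> nat \<Rightarrow> real) \<Rightarrow> nat \<times> nat \<times> nat \<Rightarrow> int" where
  "activation_pattern n01 n02 d0 f1 f2 s d1 W B X = (\<lambda>(i, j, k).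
     if (i, j, k) \<in> neurons n01 n02 f1 f2 s d1
     then (if preact d0 f1 f2 s W B X i j k > 0 then 1 else -1) else 0)"

lemma card_activation_patterns_le_num_regions:
  assumes "\<And>X i j k. X \<in> S \<Longrightarrow> preact d0 f1 f2 s W B X i j k \<noteq> 0"
  shows "card (activation_pattern n01 n02 d0 f1 f2 s d1 W B ` S) \<le> num_regions n01 n02 d0 f1 f2 s d1 W B"
  unfolding num_regions_def
proof (intro card_mono)
  let ?N = "neurons n01 n02 f1 f2 s d1"
  show "finite {p \<in> patterns ?N. region n01 n02 d0 f1 f2 s d1 W B p \<noteq> {}}"
    unfolding patterns_eq_sign_patterns
    by (auto intro: finite_subset[OF _ finite_sign_patterns[OF finite_neurons]])
  show "activation_pattern n01 n02 d0 f1 f2 s d1 W B ` S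
        \<subseteq> {p \<in> patterns ?N. region n01 n02 d0 f1 f2 s d1 W B p \<noteq> {}}"
  proof safe
    fix X assume "X \<in> S"
    then have "X \<in> region n01 n02 d0 f1 f2 s d1 W B (activation_pattern n01 n02 d0 f1 f2 s d1 W B X)"
      using assms unfolding region_def activation_pattern_def by (auto simp: not_less less_le)
    then show "region n01 n02 d0 f1 f2 s d1 W B (activation_pattern n01 n02 d0 f1 f2 s d1 W B X) = {}
               \<Longrightarrow> False" by blast
  qed (auto simp: patterns_def activation_pattern_def)
qed

definition unit_filter :: "(nat \<Rightarrow> nat \<times> nat \<times> nat) \<Rightarrow> nat \<Rightarrow> nat \<Rightarrow> nat \<Rightarrow> nat \<Rightarrow> real" where
  "unit_filter off k a b c = (if (a, b, c) = off k then 1 else 0)"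

lemma preact_unit_filter:
  assumes "off k = (a, b, c)" "(a, b, c) \<in> {1..f1} \<times> {1..f2} \<times> {1..d0}"
  shows "preact d0 f1 f2 s (unit_filter off) B X i j k = X (a + (i - 1) * s) (b + (j - 1) * s) c + B k"
proof -
  have "(\<Sum>v\<in>{1..f1} \<times> {1..f2} \<times> {1..d0}.
          (case v of (a, b, c) \<Rightarrow> unit_filter off k a b c * X (a + (i - 1) * s) (b + (j - 1) * s) c))
      = (\<Sum>v\<in>{1..f1} \<times> {1..f2} \<times> {1..d0}.
          if v = (a, b, c) then X (a + (i - 1) * s) (b + (j - 1) * s) c else 0)"
    by (rule sum.cong) (auto simp: unit_filter_def assms(1) split: if_splits)
  then show ?thesis
    using assms(2) unfolding preact_eq_sum_box by simp
qed

lemma of_nat_neq_half_integer: "real n \<noteq> real t + 1 / 2"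
proof
  assume "real n = real t + 1 / 2"
  then have "real (2 * n) = real (2 * t + 1)" by simp
  then show False by (simp only: of_nat_eq_iff) presburger
qed

text \<open>The integer inputs \<open>\<psi> \<in> U \<rightarrow> {0..G}\<close> lie in pairwise different regions: if
  \<open>\<psi> u < \<psi>' u\<close>, the neuron reading \<open>u\<close> with threshold \<open>\<psi> u + 1/2\<close> separates them.\<close>
lemma card_grid_le_num_regions:
  fixes off :: "nat \<Rightarrow> nat \<times> nat \<times> nat" and thr :: "nat \<Rightarrow> nat"
  assumes "finite U"
    and off: "\<And>k. off k \<in> {1..f1} \<times> {1..f2} \<times> {1..d0}"
    and reads: "\<And>u \<tau>. u \<in> U \<Longrightarrow> \<tau> < G \<Longrightarrow> \<exists>i j k. (i, j, k) \<in> neurons n01 n02 f1 f2 s d1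
                  \<and> u \<in> patch d0 f1 f2 s i j \<and> off k = patch_offset s i j u \<and> thr k = \<tau>"
  shows "(G + 1) ^ card U
         \<le> num_regions n01 n02 d0 f1 f2 s d1 (unit_filter off) (\<lambda>k. - (real (thr k) + 1 / 2))"
proof -
  define B where "B k = - (real (thr k) + 1 / 2)" for k
  define X where "X \<psi> a b c = real (\<psi> (a, b, c))" for \<psi> :: "nat \<times> nat \<times> nat \<Rightarrow> nat" and a b c
  let ?pattern = "\<lambda>\<psi>. activation_pattern n01 n02 d0 f1 f2 s d1 (unit_filter off) B (X \<psi>)"
  have preact: "preact d0 f1 f2 s (unit_filter off) B (X \<psi>) i j k
      = real (\<psi> (a + (i - 1) * s, b + (j - 1) * s, c)) - (real (thr k) + 1 / 2)"
    if "off k = (a, b, c)" for \<psi> a b c i j k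
    using that off[of k] by (simp add: preact_unit_filter X_def B_def)
  have nonzero: "preact d0 f1 f2 s (unit_filter off) B (X \<psi>) i j k \<noteq> 0" for \<psi> i j k
    using preact[of k] of_nat_neq_half_integer by (cases "off k") simp
  have separates: "?pattern \<psi> \<noteq> ?pattern \<psi>'"
    if u: "u \<in> U" and lt: "\<psi> u < \<psi>' u" and le: "\<psi>' u \<le> G" for u \<psi> \<psi>'
  proof -
    obtain i j k where neuron: "(i, j, k) \<in> neurons n01 n02 f1 f2 s d1"
      and "u \<in> patch d0 f1 f2 s i j" "off k = patch_offset s i j u" "thr k = \<psi> u"
      using reads[OF u, of "\<psi> u"] lt le by auto
    then obtain a b c where "off k = (a, b, c)" "u = (a + (i - 1) * s, b + (j - 1) * s, c)"
      by (metis patch_offset_mem)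
    then have "preact d0 f1 f2 s (unit_filter off) B (X \<psi>) i j k < 0"
      "preact d0 f1 f2 s (unit_filter off) B (X \<psi>') i j k > 0"
      using lt \<open>thr k = \<psi> u\<close> by (simp_all add: preact)
    with neuron have "?pattern \<psi> (i, j, k) = -1" "?pattern \<psi>' (i, j, k) = 1"
      unfolding activation_pattern_def by auto
    then show ?thesis by auto
  qed
  have "inj_on ?pattern (PiE U (\<lambda>_. {0..G}))"
  proof (rule inj_onI, rule ccontr)
    fix \<psi> \<psi>' assume \<psi>: "\<psi> \<in> PiE U (\<lambda>_. {0..G})" "\<psi>' \<in> PiE U (\<lambda>_. {0..G})"
      and same: "?pattern \<psi> = ?pattern \<psi>'" and "\<psi> \<noteq> \<psi>'"
    then obtain u where u: "u \<in> U" "\<psi> u \<noteq> \<psi>' u"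
      using PiE_ext by metis
    moreover have "\<psi> u \<le> G" "\<psi>' u \<le> G"
      using \<psi> u(1) by auto
    ultimately show False
      using separates[of u \<psi> \<psi>'] separates[of u \<psi>' \<psi>] same by force
  qed
  then have "(G + 1) ^ card U = card (?pattern ` PiE U (\<lambda>_. {0..G}))"
    by (simp add: card_image card_PiE \<open>finite U\<close>)
  also have "\<dots> \<le> num_regions n01 n02 d0 f1 f2 s d1 (unit_filter off) B"
    unfolding image_image[of "activation_pattern n01 n02 d0 f1 f2 s d1 (unit_filter off) B" X, symmetric]
    by (rule card_activation_patterns_le_num_regions) (use nonzero in blast)
  finally show ?thesis
    unfolding B_def .
qed

text \<open>Enumerate the covered entries as \<open>e 0, \<dots>, e (m - 1)\<close> and let filter \<open>k\<close> read
  \<open>e ((k - 1) mod m)\<close> with threshold \<open>(k - 1) div m\<close>.\<close>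
lemma exists_num_regions_ge:
  assumes "covered n01 n02 d0 f1 f2 s \<noteq> {}"
  obtains W B where "(d1 div card (covered n01 n02 d0 f1 f2 s) + 1) ^ card (covered n01 n02 d0 f1 f2 s)
                     \<le> num_regions n01 n02 d0 f1 f2 s d1 W B"
proof -
  let ?U = "covered n01 n02 d0 f1 f2 s"
  define m where "m = card ?U"
  have "m > 0"
    using assms finite_covered unfolding m_def by (simp add: card_gt_0_iff)
  obtain e where e: "bij_betw e {0..<m} ?U"
    using ex_bij_betw_nat_finite[OF finite_covered] unfolding m_def by blast
  have "\<forall>u\<in>?U. \<exists>ij\<in>{1..outdim n01 f1 s} \<times> {1..outdim n02 f2 s}. u \<in> patch d0 f1 f2 s (fst ij) (snd ij)"
    unfolding covered_def by auto
  then obtain pos where pos: "\<And>u. u \<in> ?U \<Longrightarrow> pos u \<in> {1..outdim n01 f1 s} \<times> {1..outdim n02 f2 s}"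
    and pos_patch: "\<And>u. u \<in> ?U \<Longrightarrow> u \<in> patch d0 f1 f2 s (fst (pos u)) (snd (pos u))"
    by metis
  define coord where "coord k = e ((k - 1) mod m)" for k
  define off where "off k = patch_offset s (fst (pos (coord k))) (snd (pos (coord k))) (coord k)" for k
  have coord: "coord k \<in> ?U" for k
    unfolding coord_def using \<open>m > 0\<close> by (intro bij_betw_apply[OF e]) simp
  have "(d1 div m + 1) ^ card ?U
        \<le> num_regions n01 n02 d0 f1 f2 s d1 (unit_filter off) (\<lambda>k. - (real ((k - 1) div m) + 1 / 2))"
  proof (rule card_grid_le_num_regions)
    show "off k \<in> {1..f1} \<times> {1..f2} \<times> {1..d0}" for k
      using pos_patch[OF coord] unfolding off_def by (metis patch_offset_mem)
    show "\<exists>i j k. (i, j, k) \<in> neurons n01 n02 f1 f2 s d1 \<and> u \<in> patch d0 f1 f2 s i j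
            \<and> off k = patch_offset s i j u \<and> (k - 1) div m = \<tau>"
      if u: "u \<in> ?U" and "\<tau> < d1 div m" for u \<tau>
    proof -
      obtain q where q: "q < m" "e q = u"
        using e u unfolding bij_betw_def by (metis atLeastLessThan_iff imageE)
      define k where "k = \<tau> * m + q + 1"
      have k: "(k - 1) div m = \<tau>" "coord k = u"
        unfolding k_def coord_def using q by auto
      have "(\<tau> + 1) * m \<le> d1 div m * m"
        using \<open>\<tau> < d1 div m\<close> by (intro mult_le_mono1) simp
      also have "\<dots> \<le> d1" by simp
      finally have "1 \<le> k \<and> k \<le> d1"
        unfolding k_def using q(1) by simp
      then show ?thesis
        using pos[OF u] pos_patch[OF u] k unfolding neurons_def off_def
        by (intro exI[of _ "fst (pos u)"] exI[of _ "snd (pos u)"] exI[of _ k]) auto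
    qed
  qed (rule finite_covered)
  from this[unfolded m_def] show thesis by (rule that)
qed

lemma bigtheta_power_if_sandwich:
  fixes f :: "nat \<Rightarrow> real" and c m :: nat
  assumes "1 \<le> m"
    and lower: "\<And>d. real ((d div m + 1) ^ m) \<le> f d"
    and upper: "\<And>d. f d \<le> real ((c * d + 1) ^ m)"
  shows "f \<in> \<Theta>(\<lambda>d. real d ^ m)"
proof (rule bigthetaI'[of "(1 / real m) ^ m" "real (c + 1) ^ m"])
  show "eventually (\<lambda>d. (1 / real m) ^ m * norm (real d ^ m) \<le> norm (f d)
          \<and> norm (f d) \<le> real (c + 1) ^ m * norm (real d ^ m)) at_top"
    unfolding eventually_at_top_linorder
  proof (intro exI[of _ 1] allI impI)
    fix d :: nat assume "1 \<le> d"
    have "d mod m < m"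
      using \<open>1 \<le> m\<close> by simp
    then have "d < d div m * m + m"
      using div_mult_mod_eq[of d m] by linarith
    then have "d \<le> (d div m + 1) * m"
      by (simp add: algebra_simps)
    then have "real d \<le> real (d div m + 1) * real m"
      by (simp only: of_nat_mult[symmetric] of_nat_le_iff)
    then have "real d / real m \<le> real (d div m + 1)"
      using \<open>1 \<le> m\<close> by (simp add: divide_le_eq)
    then have "(real d / real m) ^ m \<le> real (d div m + 1) ^ m"
      by (rule power_mono) simp
    then have lo: "(1 / real m) ^ m * real d ^ m \<le> real ((d div m + 1) ^ m)"
      by (simp add: power_divide)
    have "real (c * d + 1) \<le> real (c + 1) * real d"
      using \<open>1 \<le> d\<close> by (simp add: algebra_simps)
    then have "real (c * d + 1) ^ m \<le> (real (c + 1) * real d) ^ m"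
      by (rule power_mono) simp
    then have up: "real ((c * d + 1) ^ m) \<le> real (c + 1) ^ m * real d ^ m"
      by (simp add: power_mult_distrib)
    have "(1 / real m) ^ m * real d ^ m \<le> f d" "f d \<le> real (c + 1) ^ m * real d ^ m"
      using lo up lower[of d] upper[of d] by linarith+
    moreover have "0 \<le> f d"
      by (rule order_trans[OF _ lower[of d]]) simp
    ultimately show "(1 / real m) ^ m * norm (real d ^ m) \<le> norm (f d)
          \<and> norm (f d) \<le> real (c + 1) ^ m * norm (real d ^ m)"
      by simp
  qed
qed (use \<open>1 \<le> m\<close> in simp_all)

lemma covered_nonempty:
  assumes "1 \<le> d0" "1 \<le> f1" "1 \<le> f2"
  shows "covered n01 n02 d0 f1 f2 s \<noteq> {}"
proof -
  have "(1, 1, 1) \<in> patch d0 f1 f2 s 1 1"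
    unfolding patch_eq_image using assms by (intro image_eqI[of _ _ "(1, 1, 1)"]) auto
  moreover have "(1, 1) \<in> {1..outdim n01 f1 s} \<times> {1..outdim n02 f2 s}"
    by (simp add: outdim_def)
  ultimately show ?thesis
    unfolding covered_def by blast
qed

theorem theorem3:
  fixes n01 n02 d0 f1 f2 s :: nat
  assumes "1 \<le> s" and "1 \<le> d0"
    and "1 \<le> f1" and "f1 \<le> n01" and "1 \<le> f2" and "f2 \<le> n02"
  shows "(\<lambda>d1. real (max_regions n01 n02 d0 f1 f2 s d1))
           \<in> \<Theta>(\<lambda>d1. real d1 ^ card (covered n01 n02 d0 f1 f2 s))
       \<and> (covered n01 n02 d0 f1 f2 s = {1..n01} \<times> {1..n02} \<times> {1..d0} \<longrightarrow>
         (\<lambda>d1. real (max_regions n01 n02 d0 f1 f2 s d1))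
           \<in> \<Theta>(\<lambda>d1. real d1 ^ (n01 * n02 * d0)))"
proof -
  let ?U = "covered n01 n02 d0 f1 f2 s"
  have "?U \<noteq> {}"
    using assms by (intro covered_nonempty)
  have "(\<lambda>d1. real (max_regions n01 n02 d0 f1 f2 s d1)) \<in> \<Theta>(\<lambda>d1. real d1 ^ card ?U)"
  proof (rule bigtheta_power_if_sandwich[where c = "outdim n01 f1 s * outdim n02 f2 s"])
    show "1 \<le> card ?U"
      using \<open>?U \<noteq> {}\<close> finite_covered by (simp add: Suc_le_eq card_gt_0_iff)
    show "real ((d1 div card ?U + 1) ^ card ?U) \<le> real (max_regions n01 n02 d0 f1 f2 s d1)" for d1
    proof -
      obtain W B where "(d1 div card ?U + 1) ^ card ?U \<le> num_regions n01 n02 d0 f1 f2 s d1 W B"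
        by (rule exists_num_regions_ge[OF \<open>?U \<noteq> {}\<close>])
      also have "\<dots> \<le> max_regions n01 n02 d0 f1 f2 s d1"
        by (rule num_regions_le_max_regions)
      finally show ?thesis by (simp only: of_nat_le_iff)
    qed
    show "real (max_regions n01 n02 d0 f1 f2 s d1)
          \<le> real ((outdim n01 f1 s * outdim n02 f2 s * d1 + 1) ^ card ?U)" for d1
      using max_regions_le by (simp only: of_nat_le_iff)
  qed
  moreover have "card ({1..n01} \<times> {1..n02} \<times> {1..d0}) = n01 * n02 * d0"
    by (simp add: card_cartesian_product)
  ultimately show ?thesis by (auto simp: mult.assoc)
qed

end
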